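(* Let $H$ be a real symmetric positive definite $n\times n$ matrix, $c\in\mathbb{R}^n$, $d\in\mathbb{R}$, $\epsilon>0$, and $h(x)=x^THx+2c^Tx+d$. For any $(x,t)\in\mathbb{R}^n\times\mathbb{R}$ the following are equivalent: (i) $t\ge\bar h_\epsilon(x)$; (ii) there exist reals $s,\mu$ such that $t-s^2+c^TH^{-1}c-d\ge0$ and $$\begin{bmatrix} sI_n & H^{1/2}x+H^{-1/2}c & \epsilon H^{1/2}\\ (H^{1/2}x+H^{-1/2}c)^T & s-\mu & 0\\ \epsilon H^{1/2} & 0 & \mu I_n\end{bmatrix}\succeq0.$$
   Context: $\bar h_\epsilon(x):=\sup\{h(x'):\|x'-x\|_2\le\epsilon\}$. $H^{1/2}$ is the positive definite square root of $H$ and $H^{-1/2}$ its inverse. $M\succeq0$ means positive semidefinite. *)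

theory Defs
  imports "HOL-Analysis.Analysis"
begin

definition sym_mat :: "real^'n^'n \<Rightarrow> bool" where
  "sym_mat A \<longleftrightarrow> transpose A = A"

definition pos_def :: "real^'n^'n \<Rightarrow> bool" where
  "pos_def A \<longleftrightarrow> sym_mat A \<and> (\<forall>v. v \<noteq> 0 \<longrightarrow> v \<bullet> (A *v v) > 0)"

definition psd :: "real^'n^'n \<Rightarrow> bool" where
  "psd A \<longleftrightarrow> sym_mat A \<and> (\<forall>v. v \<bullet> (A *v v) \<ge> 0)"

definition mat_sqrt :: "real^'n^'n \<Rightarrow> real^'n^'n" where
  "mat_sqrt H = (THE S. pos_def S \<and> S ** S = H)"

definition mat_inv_sqrt :: "real^'n^'n \<Rightarrow> real^'n^'n" where
  "mat_inv_sqrt H = matrix_inv (mat_sqrt H)"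

definition quad :: "real^'n^'n \<Rightarrow> real^'n \<Rightarrow> real \<Rightarrow> real^'n \<Rightarrow> real" where
  "quad H c d x = x \<bullet> (H *v x) + 2 * (c \<bullet> x) + d"

definition robust_sup :: "(real^'n \<Rightarrow> real) \<Rightarrow> real \<Rightarrow> real^'n \<Rightarrow> real" where
  "robust_sup h \<epsilon> x = Sup {h x' | x'. norm (x' - x) \<le> \<epsilon>}"

text \<open>The (2n+1)x(2n+1) block matrix, rows/columns indexed by 'n + (unit + 'n):
  first block of size n, then one scalar row, then block of size n.\<close>
definition block_mat ::
  "real^'n^'n \<Rightarrow> real^'n \<Rightarrow> real^'n \<Rightarrow> real \<Rightarrow> real \<Rightarrow> real \<Rightarrow> real^('n + (unit + 'n))^('n + (unit + 'n))" where
  "block_mat H c x \<epsilon> s \<mu> =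
    (let R = mat_sqrt H; u = R *v x + mat_inv_sqrt H *v c in
     (\<chi> p q. case (p, q) of
        (Inl i, Inl j) \<Rightarrow> s * (mat 1 :: real^'n^'n) $ i $ j
      | (Inl i, Inr (Inl _)) \<Rightarrow> u $ i
      | (Inl i, Inr (Inr j)) \<Rightarrow> \<epsilon> * R $ i $ j
      | (Inr (Inl _), Inl j) \<Rightarrow> u $ j
      | (Inr (Inl _), Inr (Inl _)) \<Rightarrow> s - \<mu>
      | (Inr (Inl _), Inr (Inr _)) \<Rightarrow> 0
      | (Inr (Inr i), Inl j) \<Rightarrow> \<epsilon> * R $ i $ j
      | (Inr (Inr _), Inr (Inl _)) \<Rightarrow> 0
      | (Inr (Inr i), Inr (Inr j)) \<Rightarrow> \<mu> * (mat 1 :: real^'n^'n) $ i $ j))"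

end

theory Submission
  imports Defs
begin

text \<open>
  Write \<open>R = H\<^sup>1\<^sup>/\<^sup>2\<close>, \<open>u = R x + R\<^sup>-\<^sup>1 c\<close> and \<open>C = c\<^sup>T H\<^sup>-\<^sup>1 c - d\<close>.  Completing the square
  gives \<open>h(x + \<delta>) = \<parallel>u + R \<delta>\<parallel>\<^sup>2 - C\<close>, so \<open>t \<ge> h\<^sub>\<epsilon>(x)\<close> says exactly that
  \<open>\<parallel>u + R \<delta>\<parallel>\<^sup>2 \<le> t + C\<close> on the ball \<open>\<parallel>\<delta>\<parallel> \<le> \<epsilon>\<close>.  The quadratic form of the block matrix in
  block coordinates \<open>(a, b, w)\<close> is \<open>s\<parallel>a\<parallel>\<^sup>2 + 2b u\<bullet>a + 2\<epsilon> a\<bullet>R w + (s - \<mu>) b\<^sup>2 + \<mu>\<parallel>w\<parallel>\<^sup>2\<close>,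
  and the theorem reduces to: the ball bound by \<open>T\<close> holds iff this form is nonnegative for
  some \<open>s, \<mu>\<close> with \<open>s\<^sup>2 \<le> T\<close>.  Soundness is a direct specialisation of the form; completeness
  is Lagrangian duality for the trust-region problem (first- and second-order optimality at a
  maximiser on the sphere) followed by a Schur-complement argument.
\<close>

lemma sym_mat_inner:
  assumes "sym_mat A" shows "x \<bullet> (A *v y) = (A *v x) \<bullet> y"
proof -
  have "x \<bullet> (A *v y) = (x v* A) \<bullet> y" by (simp add: dot_lmul_matrix)
  also have "x v* A = A *v x"
    using assms vector_transpose_matrix[of x A] unfolding sym_mat_def by simp
  finally show ?thesis .
qed

lemma sym_matI_inner:
  fixes A :: "real^'n^'n"
  assumes "\<And>x y. x \<bullet> (A *v y) = (A *v x) \<bullet> y" shows "sym_mat A"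
proof -
  have entry: "axis i 1 \<bullet> (A *v axis j 1) = A $ i $ j" for i j
    by (simp add: inner_axis' matrix_vector_mul_component inner_axis)
  have "A $ i $ j = A $ j $ i" for i j
    using assms[of "axis i 1" "axis j 1"] by (simp add: entry inner_commute)
  then show ?thesis unfolding sym_mat_def transpose_def by (simp add: vec_eq_iff)
qed

lemma pos_def_kernel: "pos_def A \<Longrightarrow> A *v x = 0 \<Longrightarrow> x = 0"
  unfolding pos_def_def by (metis inner_zero_right less_irrefl)

lemma pos_def_invertible:
  fixes A :: "real^'n^'n" assumes "pos_def A" shows "invertible A"
  using matrix_left_invertible_ker[of A] pos_def_kernel[OF assms] invertible_left_inverse by blast

lemma matrix_inv_cancel:
  fixes A :: "real^'n^'n" assumes "invertible A"
  shows "A *v (matrix_inv A *v y) = y" "matrix_inv A *v (A *v y) = y"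
proof -
  have "\<exists>A'. A ** A' = mat 1 \<and> A' ** A = mat 1" using assms unfolding invertible_def .
  from someI_ex[OF this] have "A ** matrix_inv A = mat 1" "matrix_inv A ** A = mat 1"
    unfolding matrix_inv_def by auto
  then show "A *v (matrix_inv A *v y) = y" "matrix_inv A *v (A *v y) = y"
    by (simp_all add: matrix_vector_mul_assoc)
qed

section \<open>The spectral theorem for real symmetric matrices\<close>

text \<open>A quadratic \<open>a t + b t\<^sup>2\<close> that is nonpositive for all \<open>t\<close> has no linear term;
  this is the first-order optimality condition used for the Rayleigh quotient.\<close>

lemma quadratic_nonpos_linear_coeff:
  fixes a b :: real assumes "\<And>t. a * t + b * t^2 \<le> 0" shows "a = 0"
proof (rule ccontr)
  assume a: "a \<noteq> 0"
  define r where "r = 1 / (\<bar>b\<bar> + 1)"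
  have r: "r > 0" "\<bar>b\<bar> * r < 1" unfolding r_def by (auto simp: field_simps)
  have val: "a * (a*r) + b * (a*r)^2 = a^2 * r * (1 + b * r)"
    by (simp add: power2_eq_square algebra_simps)
  have "- (b*r) \<le> \<bar>b\<bar> * r" using r by (metis abs_ge_minus_self abs_mult abs_of_pos)
  then have "1 + b*r > 0" using r by linarith
  with a r have "a * (a*r) + b * (a*r)^2 > 0" unfolding val by simp
  then show False using assms[of "a*r"] by simp
qed

lemma rayleigh_eigenvector:
  fixes A :: "real^'n^'n"
  assumes sym: "sym_mat A" and S: "subspace S" and inv: "\<forall>x\<in>S. A *v x \<in> S" and nz: "S \<noteq> {0}"
  obtains v where "v \<in> S" "norm v = 1" "A *v v = (v \<bullet> (A *v v)) *\<^sub>R v"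
proof -
  obtain x0 where x0: "x0 \<in> S" "x0 \<noteq> 0" using S nz subspace_0 by blast
  define K where "K = S \<inter> sphere 0 1"
  have unit: "y /\<^sub>R norm y \<in> K" if "y \<in> S" "y \<noteq> 0" for y
    using that S by (simp add: K_def subspace_scale)
  have "compact K" unfolding K_def using closed_subspace[OF S] by (simp add: closed_Int_compact)
  moreover have "K \<noteq> {}" using unit[OF x0] by auto
  moreover have "continuous_on K (\<lambda>v. v \<bullet> (A *v v))"
    by (intro continuous_intros linear_continuous_on matrix_vector_mul_bounded_linear)
  ultimately obtain v where v: "v \<in> K" "\<And>y. y \<in> K \<Longrightarrow> y \<bullet> (A *v y) \<le> v \<bullet> (A *v v)"
    using continuous_attains_sup by metis
  define l where "l = v \<bullet> (A *v v)"
  have vS: "v \<in> S" and nv: "norm v = 1" using v(1) by (auto simp: K_def)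
  have vv: "v \<bullet> v = 1" using nv by (simp add: norm_eq_1)
  have bound: "y \<bullet> (A *v y) \<le> l * (y \<bullet> y)" if "y \<in> S" for y
  proof (cases "y = 0")
    case False
    from v(2)[OF unit[OF that False]] have "(y \<bullet> (A *v y)) / (norm y)^2 \<le> l"
      by (simp add: l_def matrix_vector_mult_scaleR power2_eq_square divide_inverse ac_simps)
    then show ?thesis using False by (simp add: divide_le_eq power2_norm_eq_inner mult.commute)
  qed simp
  have orth: "w \<bullet> (A *v v - l *\<^sub>R v) = 0" if w: "w \<in> S" for w
  proof -
    have "(2 * (w \<bullet> (A *v v) - l * (v \<bullet> w))) * t + (w \<bullet> (A *v w) - l * (w \<bullet> w)) * t^2 \<le> 0" for t
    proof -
      have "v + t *\<^sub>R w \<in> S" using vS w S by (simp add: subspace_add subspace_scale)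
      from bound[OF this] have
        "(v + t *\<^sub>R w) \<bullet> (A *v (v + t *\<^sub>R w)) \<le> l * ((v + t *\<^sub>R w) \<bullet> (v + t *\<^sub>R w))" .
      moreover have "v \<bullet> (A *v w) = w \<bullet> (A *v v)"
        using sym_mat_inner[OF sym, of v w] by (simp add: inner_commute)
      ultimately show ?thesis
        by (simp add: matrix_vector_right_distrib matrix_vector_mult_scaleR inner_add_left
            inner_add_right inner_commute l_def vv power2_eq_square algebra_simps)
    qed
    from quadratic_nonpos_linear_coeff[OF this] show ?thesis
      by (simp add: inner_diff_right inner_commute)
  qed
  have "A *v v - l *\<^sub>R v \<in> S" using S inv vS by (simp add: subspace_diff subspace_scale)
  from orth[OF this] have "A *v v = l *\<^sub>R v" by simp
  with vS nv that show ?thesis by (simp add: l_def)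
qed

text \<open>Every invariant subspace of a symmetric matrix has an orthonormal eigenbasis:
  split off a Rayleigh eigenvector and recurse on its orthogonal complement.\<close>

lemma invariant_subspace_eigenbasis:
  fixes A :: "real^'n^'n"
  assumes sym: "sym_mat A"
  shows "subspace S \<Longrightarrow> (\<forall>x\<in>S. A *v x \<in> S) \<Longrightarrow>
    \<exists>B. B \<subseteq> S \<and> finite B \<and> pairwise orthogonal B \<and>
        (\<forall>b\<in>B. norm b = 1 \<and> A *v b = (b \<bullet> (A *v b)) *\<^sub>R b) \<and> span B = S"
proof (induction "dim S" arbitrary: S rule: less_induct)
  case less
  show ?case
  proof (cases "S = {0}")
    case True
    then show ?thesis by (intro exI[of _ "{}"]) auto
  next
    case False
    with sym less.prems obtain v where vS: "v \<in> S" and nv: "norm v = 1"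
      and eig: "A *v v = (v \<bullet> (A *v v)) *\<^sub>R v"
      by (rule rayleigh_eigenvector)
    have vv: "v \<bullet> v = 1" using nv by (simp add: norm_eq_1)
    define S' where "S' = S \<inter> {w. v \<bullet> w = 0}"
    have subS': "subspace S'" unfolding S'_def by (intro subspace_inter less.prems(1) subspace_hyperplane)
    have invS': "\<forall>x\<in>S'. A *v x \<in> S'"
    proof
      fix x assume x: "x \<in> S'"
      have "v \<bullet> (A *v x) = (A *v v) \<bullet> x" by (rule sym_mat_inner[OF sym])
      also have "\<dots> = 0" using x by (subst eig) (simp add: S'_def)
      finally show "A *v x \<in> S'" using x less.prems(2) by (simp add: S'_def)
    qed
    have "v \<notin> S'" using vv by (simp add: S'_def)
    then have "S' \<subset> S" using vS unfolding S'_def by blast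
    then have "dim S' < dim S" using subS' less.prems(1) by (metis leI nless_le subspace_dim_equal)
    from less.hyps[OF this subS' invS'] obtain B' where B': "B' \<subseteq> S'" "finite B'"
      "pairwise orthogonal B'" "\<forall>b\<in>B'. norm b = 1 \<and> A *v b = (b \<bullet> (A *v b)) *\<^sub>R b" "span B' = S'"
      by blast
    have sub: "insert v B' \<subseteq> S" using B'(1) vS by (auto simp: S'_def)
    have "S \<subseteq> span (insert v B')"
    proof
      fix w assume w: "w \<in> S"
      have "w - (v \<bullet> w) *\<^sub>R v \<in> S'" using w vS less.prems(1) vv
        by (simp add: S'_def subspace_diff subspace_scale inner_diff_right)
      then have "w - (v \<bullet> w) *\<^sub>R v \<in> span (insert v B')" using B'(5) span_mono[of B' "insert v B'"] by auto
      moreover have "(v \<bullet> w) *\<^sub>R v \<in> span (insert v B')" by (simp add: span_base span_scale)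
      ultimately have "(w - (v \<bullet> w) *\<^sub>R v) + (v \<bullet> w) *\<^sub>R v \<in> span (insert v B')" by (rule span_add)
      then show "w \<in> span (insert v B')" by simp
    qed
    with sub span_minimal[OF sub less.prems(1)] have "span (insert v B') = S" by blast
    moreover have "pairwise orthogonal (insert v B')" using B'(1,3)
      by (auto simp: pairwise_insert S'_def orthogonal_def inner_commute)
    ultimately show ?thesis using sub B'(2,4) nv eig by (intro exI[of _ "insert v B'"]) auto
  qed
qed

lemma symmetric_eigenbasis:
  fixes A :: "real^'n^'n"
  assumes "sym_mat A"
  obtains B where "finite B" "pairwise orthogonal B" "\<And>b. b \<in> B \<Longrightarrow> norm b = 1"
    "\<And>b. b \<in> B \<Longrightarrow> A *v b = (b \<bullet> (A *v b)) *\<^sub>R b" "span B = UNIV"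
  using invariant_subspace_eigenbasis[OF assms, of UNIV] that by auto

lemma orthonormal_sum_coordinate:
  fixes g :: "real^'n \<Rightarrow> real"
  assumes "finite B" "pairwise orthogonal B" "\<And>b. b \<in> B \<Longrightarrow> norm b = 1" "b \<in> B"
  shows "(\<Sum>b'\<in>B. g b' * (b' \<bullet> b)) = g b"
proof -
  have "(\<Sum>b'\<in>B. g b' * (b' \<bullet> b)) = (\<Sum>b'\<in>B. if b' = b then g b else 0)"
    using assms(2-4) by (intro sum.cong) (auto simp: pairwise_def orthogonal_def norm_eq_1)
  also have "\<dots> = g b" using assms(1,4) by simp
  finally show ?thesis .
qed

section \<open>The positive definite square root\<close>

lemma orthonormal_weighted_squares_pos:
  fixes v :: "real^'n"
  assumes B: "finite B" "pairwise orthogonal B" "\<And>b. b \<in> B \<Longrightarrow> norm b = 1" "span B = UNIV"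
    and w: "\<And>b. b \<in> B \<Longrightarrow> w b > 0" and v: "v \<noteq> 0"
  shows "(\<Sum>b\<in>B. w b * (v \<bullet> b)^2) > 0"
proof -
  have "\<exists>b\<in>B. v \<bullet> b \<noteq> 0"
  proof (rule ccontr)
    assume "\<not> ?thesis"
    then have "(\<Sum>b\<in>B. (v \<bullet> b) *\<^sub>R b) = 0" by simp
    then show False using orthonormal_basis_expand[OF B(2,3)] B(1,4) v by simp
  qed
  then obtain b0 where b0: "b0 \<in> B" "v \<bullet> b0 \<noteq> 0" by blast
  show ?thesis
  proof (rule sum_pos2[OF B(1) b0(1)])
    show "0 < w b0 * (v \<bullet> b0)\<^sup>2" using w[OF b0(1)] b0(2) by simp
    show "0 \<le> w b * (v \<bullet> b)\<^sup>2" if "b \<in> B" for b using w[OF that] by simp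
  qed
qed

text \<open>Existence: take the square roots of the eigenvalues in an orthonormal eigenbasis.\<close>

lemma pos_def_sqrt_exists:
  fixes H :: "real^'n^'n" assumes H: "pos_def H"
  shows "\<exists>S. pos_def S \<and> S ** S = H"
proof -
  have symH: "sym_mat H" using H by (simp add: pos_def_def)
  obtain B where B: "finite B" "pairwise orthogonal B" "\<And>b. b \<in> B \<Longrightarrow> norm b = 1"
    "\<And>b. b \<in> B \<Longrightarrow> H *v b = (b \<bullet> (H *v b)) *\<^sub>R b" "span B = UNIV"
    using symmetric_eigenbasis[OF symH] by blast
  define e where "e b = b \<bullet> (H *v b)" for b
  have epos: "e b > 0" if "b \<in> B" for b
    using H B(3)[OF that] unfolding pos_def_def e_def by (metis norm_zero zero_neq_one)
  have expand: "(\<Sum>b\<in>B. (v \<bullet> b) *\<^sub>R b) = v" for v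
    using orthonormal_basis_expand[OF B(2,3)] B(1,5) by simp
  define f where "f v = (\<Sum>b\<in>B. (sqrt (e b) * (v \<bullet> b)) *\<^sub>R b)" for v
  have "linear f"
    by (rule linearI) (simp_all add: f_def inner_add_left distrib_left scaleR_add_left
        sum.distrib scaleR_sum_right ac_simps)
  define S where "S = matrix f"
  have Sv: "S *v v = f v" for v unfolding S_def using matrix_vector_mul(2)[OF \<open>linear f\<close>] by metis
  have fb: "f v \<bullet> b = sqrt (e b) * (v \<bullet> b)" if "b \<in> B" for v b
    unfolding f_def inner_sum_left
    by (simp add: orthonormal_sum_coordinate[OF B(1-3) that, of "\<lambda>b'. sqrt (e b') * (v \<bullet> b')"])
  have "sym_mat S"
    by (rule sym_matI_inner) (simp add: Sv f_def inner_sum_right inner_sum_left inner_commute ac_simps)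
  moreover have "v \<bullet> (S *v v) > 0" if "v \<noteq> 0" for v
  proof -
    have "v \<bullet> (S *v v) = (\<Sum>b\<in>B. sqrt (e b) * (v \<bullet> b)^2)"
      by (simp add: Sv f_def inner_sum_right power2_eq_square ac_simps)
    also have "\<dots> > 0" by (rule orthonormal_weighted_squares_pos[OF B(1,2,3,5) _ that]) (auto intro: epos)
    finally show ?thesis .
  qed
  moreover have "S ** S = H"
    unfolding matrix_eq
  proof
    fix v
    have "(S ** S) *v v = f (f v)" by (simp add: matrix_vector_mul_assoc[symmetric] Sv)
    also have "\<dots> = (\<Sum>b\<in>B. (e b * (v \<bullet> b)) *\<^sub>R b)"
      unfolding f_def[of "f v"] by (intro sum.cong refl) (simp add: fb epos less_imp_le)
    also have "\<dots> = (\<Sum>b\<in>B. ((H *v v) \<bullet> b) *\<^sub>R b)"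
    proof (intro sum.cong refl)
      fix b assume b: "b \<in> B"
      have "(H *v v) \<bullet> b = v \<bullet> (H *v b)" using sym_mat_inner[OF symH, of v b] by (simp add: inner_commute)
      also have "\<dots> = e b * (v \<bullet> b)" by (subst B(4)[OF b]) (simp add: e_def)
      finally show "(e b * (v \<bullet> b)) *\<^sub>R b = ((H *v v) \<bullet> b) *\<^sub>R b" by simp
    qed
    also have "\<dots> = H *v v" by (rule expand)
    finally show "(S ** S) *v v = H *v v" .
  qed
  ultimately show ?thesis unfolding pos_def_def by blast
qed

lemma matrix_vector_mult_sum: "(A::real^'n^'m) *v (\<Sum>b\<in>B. g b) = (\<Sum>b\<in>B. A *v g b)"
  by (induct B rule: infinite_finite_induct) (simp_all add: matrix_vector_right_distrib)

text \<open>Uniqueness: if \<open>S\<^sub>1\<^sup>2 = S\<^sub>2\<^sup>2\<close>, then \<open>D = S\<^sub>1 - S\<^sub>2\<close> satisfies \<open>S\<^sub>1 D + D S\<^sub>2 = 0\<close>;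
  evaluated on a unit eigenvector \<open>b\<close> of \<open>D\<close> with eigenvalue \<open>l\<close> this gives
  \<open>l (b\<^sup>T S\<^sub>1 b + b\<^sup>T S\<^sub>2 b) = 0\<close>, so every eigenvalue of \<open>D\<close> vanishes.\<close>

lemma pos_def_sqrt_unique:
  fixes S1 S2 :: "real^'n^'n"
  assumes p1: "pos_def S1" and p2: "pos_def S2" and eq: "S1 ** S1 = S2 ** S2"
  shows "S1 = S2"
proof -
  define D where "D = S1 - S2"
  have s1: "sym_mat S1" and s2: "sym_mat S2" using p1 p2 by (auto simp: pos_def_def)
  have symD: "sym_mat D"
    by (rule sym_matI_inner) (simp add: D_def matrix_vector_mult_diff_rdistrib inner_diff_right
        inner_diff_left sym_mat_inner[OF s1] sym_mat_inner[OF s2])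
  have commute: "S1 *v (D *v v) + D *v (S2 *v v) = 0" for v
  proof -
    have "S1 *v (D *v v) + D *v (S2 *v v) = S1 *v (S1 *v v) - S2 *v (S2 *v v)"
      by (simp add: D_def matrix_vector_mult_diff_rdistrib matrix_vector_mult_diff_distrib)
    also have "\<dots> = 0" using eq by (simp add: matrix_vector_mul_assoc)
    finally show ?thesis .
  qed
  obtain B where B: "finite B" "pairwise orthogonal B" "\<And>b. b \<in> B \<Longrightarrow> norm b = 1"
    "\<And>b. b \<in> B \<Longrightarrow> D *v b = (b \<bullet> (D *v b)) *\<^sub>R b" "span B = UNIV"
    using symmetric_eigenbasis[OF symD] by blast
  have Db: "D *v b = 0" if b: "b \<in> B" for b
  proof -
    define l where "l = b \<bullet> (D *v b)"
    have Dbl: "D *v b = l *\<^sub>R b" using B(4)[OF b] by (simp add: l_def)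
    have "0 = b \<bullet> (S1 *v (D *v b) + D *v (S2 *v b))" using commute[of b] by simp
    also have "\<dots> = l * (b \<bullet> (S1 *v b)) + (D *v b) \<bullet> (S2 *v b)"
      by (simp add: inner_add_right Dbl matrix_vector_mult_scaleR sym_mat_inner[OF symD])
    also have "\<dots> = l * (b \<bullet> (S1 *v b) + b \<bullet> (S2 *v b))" by (simp add: Dbl algebra_simps)
    finally have "l * (b \<bullet> (S1 *v b) + b \<bullet> (S2 *v b)) = 0" by simp
    moreover have "b \<noteq> 0" using B(3)[OF b] by auto
    then have "b \<bullet> (S1 *v b) + b \<bullet> (S2 *v b) > 0"
      using p1 p2 unfolding pos_def_def by (simp add: add_pos_pos)
    ultimately show ?thesis using Dbl by simp
  qed
  have "D = 0"
    unfolding matrix_eq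
  proof
    fix v
    have "D *v v = D *v (\<Sum>b\<in>B. (v \<bullet> b) *\<^sub>R b)"
      using orthonormal_basis_expand[OF B(2,3)] B(1,5) by simp
    also have "\<dots> = (\<Sum>b\<in>B. (v \<bullet> b) *\<^sub>R (D *v b))"
      by (simp add: matrix_vector_mult_sum matrix_vector_mult_scaleR)
    finally show "D *v v = 0 *v v" by (simp add: Db)
  qed
  then show ?thesis by (simp add: D_def)
qed

lemma mat_sqrt:
  fixes H :: "real^'n^'n" assumes "pos_def H"
  shows "pos_def (mat_sqrt H)" "mat_sqrt H ** mat_sqrt H = H"
proof -
  have "\<exists>!S. pos_def S \<and> S ** S = H"
    using pos_def_sqrt_exists[OF assms] pos_def_sqrt_unique by metis
  from theI'[OF this] show "pos_def (mat_sqrt H)" "mat_sqrt H ** mat_sqrt H = H"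
    unfolding mat_sqrt_def by auto
qed

lemma quad_completed_square:
  fixes H R :: "real^'n^'n"
  assumes symR: "sym_mat R" and invR: "invertible R" and RR: "R ** R = H"
  shows "quad H c d y + c \<bullet> (matrix_inv H *v c) - d =
    (R *v y + matrix_inv R *v c) \<bullet> (R *v y + matrix_inv R *v c)"
proof -
  define v where "v = matrix_inv R *v c"
  have c: "c = R *v v" by (simp add: v_def matrix_inv_cancel[OF invR])
  have HR: "H *v z = R *v (R *v z)" for z using RR by (simp add: matrix_vector_mul_assoc)
  have invH: "invertible H" using invR RR invertible_mult by metis
  have "matrix_inv H *v c = matrix_inv H *v (H *v (matrix_inv R *v v))"
    by (simp add: HR c matrix_inv_cancel[OF invR])
  then have Hic: "matrix_inv H *v c = matrix_inv R *v v" by (simp add: matrix_inv_cancel[OF invH])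
  have 1: "y \<bullet> (H *v y) = (R *v y) \<bullet> (R *v y)"
    using sym_mat_inner[OF symR, of y "R *v y"] by (simp add: HR)
  have 2: "c \<bullet> y = (R *v y) \<bullet> v" using sym_mat_inner[OF symR, of v y] by (simp add: c inner_commute)
  have 3: "c \<bullet> (matrix_inv H *v c) = v \<bullet> v"
    unfolding Hic using sym_mat_inner[OF symR, of v "matrix_inv R *v v"] by (simp add: c matrix_inv_cancel[OF invR])
  show ?thesis unfolding quad_def 1 2 3 v_def[symmetric]
    by (simp add: inner_add_left inner_add_right inner_commute)
qed

text \<open>For a function continuous on the closed ball, the supremum over the ball is attained
  within a bounded set, so bounding it amounts to bounding every value on the ball.\<close>

lemma robust_sup_le_iff:
  fixes h :: "real^'n \<Rightarrow> real"
  assumes cont: "continuous_on (cball x \<epsilon>) h" and e: "\<epsilon> \<ge> 0"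
  shows "robust_sup h \<epsilon> x \<le> t \<longleftrightarrow> (\<forall>\<delta>. norm \<delta> \<le> \<epsilon> \<longrightarrow> h (x + \<delta>) \<le> t)"
proof -
  have set: "{h x' | x'. norm (x' - x) \<le> \<epsilon>} = h ` cball x \<epsilon>"
    by (auto simp: dist_norm norm_minus_commute)
  have "bdd_above (h ` cball x \<epsilon>)"
    using compact_continuous_image[OF cont compact_cball] by (simp add: bounded_imp_bdd_above compact_imp_bounded)
  moreover have "h ` cball x \<epsilon> \<noteq> {}" using e by simp
  ultimately have "robust_sup h \<epsilon> x \<le> t \<longleftrightarrow> (\<forall>x'\<in>cball x \<epsilon>. h x' \<le> t)"
    unfolding robust_sup_def set by (simp add: cSup_le_iff)
  also have "\<dots> \<longleftrightarrow> (\<forall>\<delta>. norm \<delta> \<le> \<epsilon> \<longrightarrow> h (x + \<delta>) \<le> t)"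
  proof
    assume "\<forall>x'\<in>cball x \<epsilon>. h x' \<le> t"
    then show "\<forall>\<delta>. norm \<delta> \<le> \<epsilon> \<longrightarrow> h (x + \<delta>) \<le> t" by (auto simp: dist_norm)
  next
    assume shifted: "\<forall>\<delta>. norm \<delta> \<le> \<epsilon> \<longrightarrow> h (x + \<delta>) \<le> t"
    show "\<forall>x'\<in>cball x \<epsilon>. h x' \<le> t"
    proof
      fix x' assume "x' \<in> cball x \<epsilon>"
      then have "norm (x' - x) \<le> \<epsilon>" by (simp add: dist_norm norm_minus_commute)
      with shifted show "h x' \<le> t" by force
    qed
  qed
  finally show ?thesis .
qed

section \<open>Lagrangian duality for the trust-region maximisation\<close>

text \<open>We maximise \<open>\<phi>(\<delta>) = \<parallel>u + R \<delta>\<parallel>\<^sup>2\<close> over the sphere \<open>\<parallel>\<delta>\<parallel> = \<epsilon>\<close> for a symmetric \<open>R\<close>.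
  At a maximiser \<open>\<delta>\<^sub>s\<close> the gradient \<open>R(u + R \<delta>\<^sub>s)\<close> is a nonnegative multiple \<open>\<lambda> \<delta>\<^sub>s\<close>
  (first-order condition) and \<open>R\<^sup>2 \<preceq> \<lambda> I\<close> (second-order condition); together they give the
  Lagrangian bound \<open>\<phi>(\<delta>) + \<lambda>(\<epsilon>\<^sup>2 - \<parallel>\<delta>\<parallel>\<^sup>2) \<le> \<phi>(\<delta>\<^sub>s)\<close> for every \<open>\<delta>\<close>.\<close>

lemma affine_square_expand:
  fixes R :: "real^'n^'n"
  assumes "sym_mat R"
  shows "(u + R *v (d + z)) \<bullet> (u + R *v (d + z)) =
     (u + R *v d) \<bullet> (u + R *v d) + 2 * (z \<bullet> (R *v (u + R *v d))) + (R *v z) \<bullet> (R *v z)"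
proof -
  have "(u + R *v d) \<bullet> (R *v z) = z \<bullet> (R *v (u + R *v d))"
    using sym_mat_inner[OF assms, of "u + R *v d" z] by (simp add: inner_commute)
  then show ?thesis
    by (simp add: matrix_vector_right_distrib inner_add_left inner_add_right inner_commute)
qed

lemma sphere_max_increment:
  fixes R :: "real^'n^'n"
  assumes sym: "sym_mat R"
    and max: "\<And>d. norm d = \<epsilon> \<Longrightarrow> (u + R *v d) \<bullet> (u + R *v d) \<le> (u + R *v ds) \<bullet> (u + R *v ds)"
    and d: "norm d = \<epsilon>"
  shows "2 * ((d - ds) \<bullet> (R *v (u + R *v ds))) + (R *v (d - ds)) \<bullet> (R *v (d - ds)) \<le> 0"
proof -
  have "ds + (d - ds) = d" by simp
  then have "(u + R *v d) \<bullet> (u + R *v d) = (u + R *v ds) \<bullet> (u + R *v ds) +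
      2 * ((d - ds) \<bullet> (R *v (u + R *v ds))) + (R *v (d - ds)) \<bullet> (R *v (d - ds))"
    using affine_square_expand[OF sym, of u ds "d - ds"] by metis
  with max[OF d] show ?thesis by linarith
qed

text \<open>The point of the sphere
  in the direction of the gradient \<open>p\<close> does not increase \<open>\<phi>\<close>, which forces equality in
  Cauchy--Schwarz for \<open>\<delta>\<^sub>s \<bullet> p\<close>.\<close>

lemma sphere_max_first_order:
  fixes R :: "real^'n^'n"
  assumes sym: "sym_mat R" and e: "\<epsilon> > 0" and nds: "norm ds = \<epsilon>"
    and max: "\<And>d. norm d = \<epsilon> \<Longrightarrow> (u + R *v d) \<bullet> (u + R *v d) \<le> (u + R *v ds) \<bullet> (u + R *v ds)"
  obtains lam where "lam \<ge> 0" "R *v (u + R *v ds) = lam *\<^sub>R ds"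
proof -
  define p where "p = R *v (u + R *v ds)"
  have "\<exists>lam \<ge> 0. p = lam *\<^sub>R ds"
  proof (cases "p = 0")
    case False
    define d where "d = (\<epsilon> / norm p) *\<^sub>R p"
    have nd: "norm d = \<epsilon>" unfolding d_def using False e by simp
    have "(d - ds) \<bullet> p \<le> 0"
      using sphere_max_increment[OF sym max nd] inner_ge_zero[of "R *v (d - ds)"] unfolding p_def
      by linarith
    moreover have "d \<bullet> p = \<epsilon> * norm p" unfolding d_def using False
      by (simp add: power2_norm_eq_inner[symmetric] power2_eq_square)
    ultimately have "ds \<bullet> p \<ge> norm ds * norm p" using nds by (simp add: inner_diff_left)
    with norm_cauchy_schwarz[of ds p] have "ds \<bullet> p = norm ds * norm p" by simp
    then have "norm ds *\<^sub>R p = norm p *\<^sub>R ds" by (simp add: norm_cauchy_schwarz_eq)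
    then have parallel: "\<epsilon> *\<^sub>R p = norm p *\<^sub>R ds" using nds by simp
    have "p = (1 / \<epsilon>) *\<^sub>R (\<epsilon> *\<^sub>R p)" using e by simp
    also have "\<dots> = (norm p / \<epsilon>) *\<^sub>R ds" unfolding parallel by simp
    finally have "p = (norm p / \<epsilon>) *\<^sub>R ds" .
    moreover have "norm p / \<epsilon> \<ge> 0" using e by simp
    ultimately show ?thesis by blast
  qed auto
  then show ?thesis using that unfolding p_def by blast
qed

lemma nonpos_of_small_linear_bound:
  fixes a b c :: real
  assumes "\<And>\<tau>. 0 < \<tau> \<Longrightarrow> \<tau> \<le> 1 \<Longrightarrow> a \<le> \<tau> * (b + \<tau> * c)"
  shows "a \<le> 0"
proof (rule ccontr)
  assume "\<not> a \<le> 0" then have a: "a > 0" by simp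
  define K where "K = \<bar>b\<bar> + \<bar>c\<bar> + 1"
  have K: "K \<ge> 1" unfolding K_def by simp
  define \<tau> where "\<tau> = min 1 (a / (2*K))"
  have t: "0 < \<tau>" "\<tau> \<le> 1" "\<tau> \<le> a / (2*K)" using a K unfolding \<tau>_def by auto
  have "\<tau> * c \<le> \<bar>c\<bar>" using t by (metis abs_ge_self abs_mult abs_of_pos dual_order.trans mult_left_le_one_le abs_ge_zero)
  then have "b + \<tau> * c \<le> K" unfolding K_def by linarith
  then have "\<tau> * (b + \<tau> * c) \<le> \<tau> * K" using t by (simp add: mult_left_mono)
  also have "\<dots> \<le> a / (2*K) * K" using mult_right_mono[OF t(3), of K] K by simp
  also have "\<dots> = a / 2" using K by simp
  finally show False using assms[OF t(1,2)] a by linarith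
qed

text \<open>For \<open>z \<bullet> \<delta>\<^sub>s \<noteq> 0\<close> the line through
  \<open>\<delta>\<^sub>s\<close> in direction \<open>z\<close> meets the sphere again at \<open>\<delta>\<^sub>s + \<sigma> z\<close>, where the first-order
  terms cancel; the case \<open>z \<bullet> \<delta>\<^sub>s = 0\<close> follows by perturbing \<open>z\<close> to \<open>z + \<tau> \<delta>\<^sub>s\<close>.\<close>

lemma sphere_max_second_order:
  fixes R :: "real^'n^'n"
  assumes sym: "sym_mat R" and e: "\<epsilon> > 0" and nds: "norm ds = \<epsilon>"
    and max: "\<And>d. norm d = \<epsilon> \<Longrightarrow> (u + R *v d) \<bullet> (u + R *v d) \<le> (u + R *v ds) \<bullet> (u + R *v ds)"
    and grad: "R *v (u + R *v ds) = lam *\<^sub>R ds"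
  shows "(R *v z) \<bullet> (R *v z) \<le> lam * (z \<bullet> z)"
proof -
  have dsds: "ds \<bullet> ds = \<epsilon>^2" using nds by (simp add: power2_norm_eq_inner[symmetric])
  have transversal: "(R *v y) \<bullet> (R *v y) \<le> lam * (y \<bullet> y)" if y: "y \<bullet> ds \<noteq> 0" for y
  proof -
    have yy: "y \<bullet> y > 0" using y by auto
    define \<sigma> where "\<sigma> = - 2 * (y \<bullet> ds) / (y \<bullet> y)"
    have s0: "\<sigma> \<noteq> 0" unfolding \<sigma>_def using y yy by simp
    have sy: "\<sigma> * (y \<bullet> y) = - 2 * (y \<bullet> ds)" unfolding \<sigma>_def using yy by simp
    have "(ds + \<sigma> *\<^sub>R y) \<bullet> (ds + \<sigma> *\<^sub>R y) = ds \<bullet> ds + \<sigma> * (2 * (y \<bullet> ds) + \<sigma> * (y \<bullet> y))"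
      by (simp add: inner_add_left inner_add_right inner_commute algebra_simps)
    also have "\<dots> = \<epsilon>^2" using sy dsds by simp
    finally have "norm (ds + \<sigma> *\<^sub>R y) = \<epsilon>" using e
      by (metis norm_eq_sqrt_inner real_sqrt_abs abs_of_pos)
    from sphere_max_increment[OF sym max this]
    have "2 * (\<sigma> * lam * (y \<bullet> ds)) + \<sigma>^2 * ((R *v y) \<bullet> (R *v y)) \<le> 0"
      by (simp add: grad matrix_vector_mult_scaleR power2_eq_square ac_simps)
    then have "\<sigma>^2 * ((R *v y) \<bullet> (R *v y)) \<le> \<sigma>^2 * (lam * (y \<bullet> y))"
      using sy by (simp add: power2_eq_square algebra_simps)
    moreover have "\<sigma>^2 > 0" using s0 by simp
    ultimately show ?thesis by simp
  qed
  show ?thesis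
  proof (cases "z \<bullet> ds = 0")
    case False
    then show ?thesis by (rule transversal)
  next
    case True
    have "(R *v z) \<bullet> (R *v z) - lam * (z \<bullet> z) \<le>
          \<tau> * ((- 2 * ((R *v z) \<bullet> (R *v ds))) + \<tau> * (lam * \<epsilon>^2 - (R *v ds) \<bullet> (R *v ds)))"
      if t: "0 < \<tau>" "\<tau> \<le> 1" for \<tau>
    proof -
      have "(z + \<tau> *\<^sub>R ds) \<bullet> ds = \<tau> * \<epsilon>^2" using True dsds by (simp add: inner_add_left)
      then have "(z + \<tau> *\<^sub>R ds) \<bullet> ds \<noteq> 0" using t e by simp
      from transversal[OF this] show ?thesis using True dsds
        by (simp add: matrix_vector_right_distrib matrix_vector_mult_scaleR inner_add_left
            inner_add_right inner_commute power2_eq_square algebra_simps)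
    qed
    from nonpos_of_small_linear_bound[OF this] show ?thesis by simp
  qed
qed

text \<open>The Lagrangian bound (an instance of the S-lemma for the trust-region problem): there is a
  multiplier \<open>\<kappa> \<ge> 0\<close> with \<open>R\<^sup>2 \<preceq> \<kappa> I\<close> and a point \<open>\<delta>\<^sub>s\<close> of the sphere such that
  \<open>\<phi>(\<delta>) + \<kappa>(\<epsilon>\<^sup>2 - \<parallel>\<delta>\<parallel>\<^sup>2) \<le> \<phi>(\<delta>\<^sub>s)\<close> for all \<open>\<delta>\<close>.\<close>

lemma trust_region_lagrangian_bound:
  fixes R :: "real^'n^'n" and u :: "real^'n"
  assumes sym: "sym_mat R" and e: "\<epsilon> > 0"
  obtains \<kappa> ds where "norm ds = \<epsilon>" "\<And>z. (R *v z) \<bullet> (R *v z) \<le> \<kappa> * (z \<bullet> z)"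
    "\<And>d. (u + R *v d) \<bullet> (u + R *v d) + \<kappa> * (\<epsilon>^2 - d \<bullet> d) \<le> (u + R *v ds) \<bullet> (u + R *v ds)"
proof -
  define \<phi> where "\<phi> d = (u + R *v d) \<bullet> (u + R *v d)" for d
  obtain i :: 'n where True by simp
  have "continuous_on (sphere 0 \<epsilon>) \<phi>" unfolding \<phi>_def
    by (intro continuous_intros linear_continuous_on matrix_vector_mul_bounded_linear)
  moreover have "\<epsilon> *\<^sub>R axis i 1 \<in> sphere (0::real^'n) \<epsilon>" using e by (simp add: norm_axis_1)
  then have "sphere (0::real^'n) \<epsilon> \<noteq> {}" by blast
  ultimately obtain ds where ds: "ds \<in> sphere 0 \<epsilon>" "\<And>d. d \<in> sphere 0 \<epsilon> \<Longrightarrow> \<phi> d \<le> \<phi> ds"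
    using continuous_attains_sup[OF compact_sphere] by blast
  have nds: "norm ds = \<epsilon>" using ds(1) by simp
  have max: "\<And>d. norm d = \<epsilon> \<Longrightarrow> \<phi> d \<le> \<phi> ds" using ds(2) by simp
  obtain lam where lam: "lam \<ge> 0" "R *v (u + R *v ds) = lam *\<^sub>R ds"
    using sphere_max_first_order[OF sym e nds max[unfolded \<phi>_def]] by blast
  note second = sphere_max_second_order[OF sym e nds max[unfolded \<phi>_def] lam(2)]
  have "\<phi> d + lam * (\<epsilon>^2 - d \<bullet> d) \<le> \<phi> ds" for d
  proof -
    define z where "z = d - ds"
    have "ds + z = d" by (simp add: z_def)
    then have expand: "\<phi> d = \<phi> ds + 2 * lam * (z \<bullet> ds) + (R *v z) \<bullet> (R *v z)"
      using affine_square_expand[OF sym, of u ds z] lam(2) unfolding \<phi>_def by simp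
    have "ds \<bullet> ds = \<epsilon>^2" using nds by (simp add: power2_norm_eq_inner[symmetric])
    then have gap: "\<epsilon>^2 - d \<bullet> d = - 2 * (z \<bullet> ds) - z \<bullet> z"
      unfolding z_def by (simp add: inner_diff_left inner_diff_right inner_commute algebra_simps)
    have "lam * (\<epsilon>^2 - d \<bullet> d) = - 2 * lam * (z \<bullet> ds) - lam * (z \<bullet> z)"
      unfolding gap by (simp add: algebra_simps)
    then show ?thesis using expand second[of z] by linarith
  qed
  from that[OF nds second this[unfolded \<phi>_def]] show ?thesis .
qed

section \<open>The block matrix and its quadratic form\<close>

text \<open>Vectors indexed by \<open>'n + (unit + 'n)\<close> are assembled from a block \<open>a\<close>, a scalar \<open>b\<close>
  and a block \<open>w\<close>; the quadratic form of the block matrix in these coordinates is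
  \<open>block_form\<close>.\<close>

definition block_vec :: "real^'n \<Rightarrow> real \<Rightarrow> real^'n \<Rightarrow> real^('n + (unit + 'n))" where
  "block_vec a b w = (\<chi> p. case p of Inl i \<Rightarrow> a $ i | Inr (Inl _) \<Rightarrow> b | Inr (Inr j) \<Rightarrow> w $ j)"

definition block_form ::
  "real^'n^'n \<Rightarrow> real^'n \<Rightarrow> real \<Rightarrow> real \<Rightarrow> real \<Rightarrow> real^'n \<Rightarrow> real \<Rightarrow> real^'n \<Rightarrow> real" where
  "block_form R u \<epsilon> s \<mu> a b w =
     s * (a \<bullet> a) + 2 * b * (u \<bullet> a) + 2 * \<epsilon> * (a \<bullet> (R *v w)) + (s - \<mu>) * b^2 + \<mu> * (w \<bullet> w)"

lemma block_vec_surj: "z = block_vec (\<chi> i. z $ Inl i) (z $ Inr (Inl ())) (\<chi> j. z $ Inr (Inr j))"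
  unfolding block_vec_def by (simp add: vec_eq_iff split: sum.split)

lemma sum_UNIV_Plus:
  "sum f (UNIV :: ('a::finite + 'b::finite) set) = sum (f \<circ> Inl) UNIV + sum (f \<circ> Inr) UNIV"
  by (metis UNIV_Plus_UNIV finite_class.finite_UNIV sum.Plus)

lemma sum_UNIV_block:
  "sum f (UNIV :: ('a::finite + (unit + 'b::finite)) set) =
     (\<Sum>i\<in>UNIV. f (Inl i)) + f (Inr (Inl ())) + (\<Sum>j\<in>UNIV. f (Inr (Inr j)))"
  by (simp add: sum_UNIV_Plus UNIV_unit o_def add.assoc)

lemma block_mat_mult_block_vec:
  fixes H :: "real^'n^'n" and c x :: "real^'n"
  defines "R \<equiv> mat_sqrt H" and "u \<equiv> mat_sqrt H *v x + mat_inv_sqrt H *v c"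
  shows "block_mat H c x \<epsilon> s \<mu> *v block_vec a b w = block_vec
    (s *\<^sub>R a + b *\<^sub>R u + \<epsilon> *\<^sub>R (R *v w)) (u \<bullet> a + (s - \<mu>) * b) (\<epsilon> *\<^sub>R (R *v a) + \<mu> *\<^sub>R w)"
proof -
  have "(block_mat H c x \<epsilon> s \<mu> *v block_vec a b w) $ p =
    block_vec (s *\<^sub>R a + b *\<^sub>R u + \<epsilon> *\<^sub>R (R *v w)) (u \<bullet> a + (s - \<mu>) * b)
      (\<epsilon> *\<^sub>R (R *v a) + \<mu> *\<^sub>R w) $ p" for p
    by (auto simp: matrix_vector_mult_def sum_UNIV_block block_mat_def block_vec_def Let_def
        R_def u_def mat_def inner_vec_def sum_distrib_left ac_simps if_distrib if_distribR
        split: sum.split cong: if_cong)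
  then show ?thesis by (simp add: vec_eq_iff)
qed

lemma inner_block_vec:
  "block_vec a b w \<bullet> block_vec a' b' w' = a \<bullet> a' + b * b' + w \<bullet> w'"
  by (simp add: inner_vec_def sum_UNIV_block block_vec_def)

lemma block_mat_quadratic_form:
  fixes H :: "real^'n^'n" and c x :: "real^'n"
  assumes "sym_mat (mat_sqrt H)"
  shows "block_vec a b w \<bullet> (block_mat H c x \<epsilon> s \<mu> *v block_vec a b w) =
    block_form (mat_sqrt H) (mat_sqrt H *v x + mat_inv_sqrt H *v c) \<epsilon> s \<mu> a b w"
proof -
  have "w \<bullet> (mat_sqrt H *v a) = a \<bullet> (mat_sqrt H *v w)"
    using sym_mat_inner[OF assms, of w a] by (simp add: inner_commute)
  then show ?thesis
    by (simp add: block_mat_mult_block_vec inner_block_vec block_form_def inner_add_right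
        inner_commute power2_eq_square algebra_simps)
qed

lemma block_mat_sym:
  fixes H :: "real^'n^'n" and c x :: "real^'n"
  assumes "sym_mat (mat_sqrt H)"
  shows "sym_mat (block_mat H c x \<epsilon> s \<mu>)"
proof -
  have R: "mat_sqrt H $ i $ j = mat_sqrt H $ j $ i" for i j
    using assms unfolding sym_mat_def transpose_def by (metis vec_lambda_beta)
  show ?thesis
    unfolding sym_mat_def transpose_def
    by (auto simp: vec_eq_iff block_mat_def Let_def R mat_def split: sum.split)
qed

lemma psd_block_mat_iff:
  fixes H :: "real^'n^'n" and c x :: "real^'n"
  assumes "sym_mat (mat_sqrt H)"
  shows "psd (block_mat H c x \<epsilon> s \<mu>) \<longleftrightarrow>
    (\<forall>a b w. 0 \<le> block_form (mat_sqrt H) (mat_sqrt H *v x + mat_inv_sqrt H *v c) \<epsilon> s \<mu> a b w)"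
  unfolding psd_def using block_mat_sym[OF assms] block_mat_quadratic_form[OF assms]
  by (metis block_vec_surj)

section \<open>Robust bound on the ball versus the linear matrix inequality\<close>

text \<open>Choosing \<open>b = 1\<close>, \<open>w = \<delta>/\<epsilon>\<close> (and using \<open>\<mu> \<ge> 0\<close>) gives
  \<open>s \<parallel>a\<parallel>\<^sup>2 + 2 a \<bullet> v + s \<ge> 0\<close> for \<open>v = u + R \<delta>\<close> and all \<open>a\<close>; then take \<open>a = -v/s\<close>.\<close>

lemma block_form_nonneg_imp_ball_bound:
  fixes R :: "real^'n^'n"
  assumes e: "\<epsilon> > 0" and Q: "\<And>a b w. 0 \<le> block_form R u \<epsilon> s \<mu> a b w" and \<delta>: "norm \<delta> \<le> \<epsilon>"
  shows "(u + R *v \<delta>) \<bullet> (u + R *v \<delta>) \<le> s^2"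
proof -
  define v where "v = u + R *v \<delta>"
  obtain i :: 'n where True by simp
  have mu0: "\<mu> \<ge> 0" using Q[of 0 0 "axis i 1"] by (simp add: block_form_def inner_axis_axis)
  have s0: "s \<ge> 0" using Q[of "axis i 1" 0 0] by (simp add: block_form_def inner_axis_axis)
  have dd: "(\<delta> \<bullet> \<delta>) / \<epsilon>^2 \<le> 1"
    using \<delta> e by (simp add: power2_norm_eq_inner[symmetric] power_mono)
  have Qa: "0 \<le> s * (a \<bullet> a) + 2 * (a \<bullet> v) + s" for a
  proof -
    have "0 \<le> block_form R u \<epsilon> s \<mu> a 1 ((1/\<epsilon>) *\<^sub>R \<delta>)" by (rule Q)
    also have "\<dots> = s * (a \<bullet> a) + 2 * (a \<bullet> v) + s - \<mu> * (1 - (\<delta> \<bullet> \<delta>) / \<epsilon>^2)"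
      using e by (simp add: block_form_def v_def matrix_vector_mult_scaleR inner_add_right
          inner_commute field_simps power2_eq_square)
    also have "\<dots> \<le> s * (a \<bullet> a) + 2 * (a \<bullet> v) + s" using dd mu0 by simp
    finally show ?thesis .
  qed
  have "v \<bullet> v \<le> s^2"
  proof (cases "s = 0")
    case True
    then show ?thesis using Qa[of "- v"] by simp
  next
    case False
    then have sp: "s > 0" using s0 by simp
    have "0 \<le> s * (((-1/s) *\<^sub>R v) \<bullet> ((-1/s) *\<^sub>R v)) + 2 * (((-1/s) *\<^sub>R v) \<bullet> v) + s" by (rule Qa)
    also have "\<dots> = s - (v \<bullet> v) / s" using sp by (simp add: field_simps power2_eq_square)
    finally show ?thesis using sp by (simp add: field_simps power2_eq_square)
  qed
  then show ?thesis by (simp add: v_def)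
qed

text \<open>Completeness, Schur-complement step: a Lagrangian bound with multiplier \<open>\<kappa>\<close> makes the
  block form nonnegative for \<open>\<mu> = \<kappa> \<epsilon>\<^sup>2 / s\<close>.  Minimising over \<open>a\<close> leaves
  \<open>s ((s - \<mu>) b\<^sup>2 + \<mu> \<parallel>w\<parallel>\<^sup>2) \<ge> \<parallel>b u + \<epsilon> R w\<parallel>\<^sup>2\<close>, which is the Lagrangian bound at
  \<open>\<delta> = \<epsilon> w / b\<close> when \<open>b \<noteq> 0\<close> and the bound \<open>R\<^sup>2 \<preceq> \<kappa> I\<close> when \<open>b = 0\<close>.\<close>

lemma lagrangian_bound_imp_block_form_nonneg:
  fixes R :: "real^'n^'n"
  assumes spos: "s > 0"
    and RR: "\<And>z. (R *v z) \<bullet> (R *v z) \<le> \<kappa> * (z \<bullet> z)"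
    and lagr: "\<And>d. (u + R *v d) \<bullet> (u + R *v d) + \<kappa> * (\<epsilon>^2 - d \<bullet> d) \<le> s^2"
  shows "0 \<le> block_form R u \<epsilon> s (\<kappa> * \<epsilon>^2 / s) a b w"
proof -
  define \<mu> where "\<mu> = \<kappa> * \<epsilon>^2 / s"
  have smu: "s * \<mu> = \<kappa> * \<epsilon>^2" using spos by (simp add: \<mu>_def)
  define p where "p = b *\<^sub>R u + \<epsilon> *\<^sub>R (R *v w)"
  have form: "block_form R u \<epsilon> s \<mu> a b w = s * (a \<bullet> a) + 2 * (a \<bullet> p) + ((s - \<mu>) * b^2 + \<mu> * (w \<bullet> w))"
    by (simp add: block_form_def p_def inner_add_right inner_commute algebra_simps)
  have min_a: "s * (a \<bullet> a) + 2 * (a \<bullet> p) \<ge> - (p \<bullet> p) / s"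
  proof -
    have "0 \<le> (s *\<^sub>R a + p) \<bullet> (s *\<^sub>R a + p)" by simp
    also have "\<dots> = s * (s * (a \<bullet> a) + 2 * (a \<bullet> p)) + p \<bullet> p"
      by (simp add: inner_add_left inner_add_right inner_commute algebra_simps)
    finally show ?thesis using spos by (simp add: field_simps)
  qed
  have schur: "p \<bullet> p \<le> s * ((s - \<mu>) * b^2 + \<mu> * (w \<bullet> w))"
  proof (cases "b = 0")
    case True
    have "p \<bullet> p = \<epsilon>^2 * ((R *v w) \<bullet> (R *v w))" using True by (simp add: p_def power2_eq_square)
    also have "\<dots> \<le> \<epsilon>^2 * (\<kappa> * (w \<bullet> w))" using RR[of w] by (simp add: mult_left_mono)
    also have "\<dots> = (s * \<mu>) * (w \<bullet> w)" unfolding smu by (simp add: algebra_simps)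
    also have "\<dots> = s * ((s - \<mu>) * b^2 + \<mu> * (w \<bullet> w))" using True by (simp add: algebra_simps)
    finally show ?thesis .
  next
    case False
    define d where "d = (\<epsilon> / b) *\<^sub>R w"
    have pe: "p = b *\<^sub>R (u + R *v d)" using False
      by (simp add: p_def d_def matrix_vector_mult_scaleR scaleR_add_right)
    have dd: "b^2 * (d \<bullet> d) = \<epsilon>^2 * (w \<bullet> w)" using False
      by (simp add: d_def power2_eq_square field_simps)
    have "p \<bullet> p = b^2 * ((u + R *v d) \<bullet> (u + R *v d))" by (simp add: pe power2_eq_square)
    also have "\<dots> \<le> b^2 * (s^2 - \<kappa> * (\<epsilon>^2 - d \<bullet> d))"
      using lagr[of d] by (intro mult_left_mono) auto
    also have "\<dots> = b^2 * s^2 - \<kappa> * \<epsilon>^2 * b^2 + \<kappa> * (b^2 * (d \<bullet> d))" by (simp add: algebra_simps)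
    also have "\<dots> = b^2 * s^2 - (s * \<mu>) * b^2 + (s * \<mu>) * (w \<bullet> w)"
      unfolding smu dd by (simp add: algebra_simps)
    also have "\<dots> = s * ((s - \<mu>) * b^2 + \<mu> * (w \<bullet> w))" by (simp add: algebra_simps power2_eq_square)
    finally show ?thesis .
  qed
  have "- (p \<bullet> p) / s + ((s - \<mu>) * b^2 + \<mu> * (w \<bullet> w)) \<ge> 0"
    using schur spos by (simp add: field_simps)
  then show ?thesis using min_a form unfolding \<mu>_def by linarith
qed

text \<open>Completeness: a bound \<open>T\<close> on the ball is certified by the LMI with \<open>s = \<surd>T\<close>.  Positive
  definiteness of \<open>R\<close> gives \<open>T > 0\<close>: otherwise \<open>u + R \<delta>\<close> would vanish at both \<open>\<delta> = 0\<close> and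
  \<open>\<delta> = \<delta>\<^sub>s \<noteq> 0\<close>.\<close>

lemma ball_bound_imp_block_form_nonneg:
  fixes R :: "real^'n^'n"
  assumes pdR: "pos_def R" and e: "\<epsilon> > 0"
    and bound: "\<And>\<delta>. norm \<delta> \<le> \<epsilon> \<Longrightarrow> (u + R *v \<delta>) \<bullet> (u + R *v \<delta>) \<le> T"
  shows "\<exists>s \<mu>. s^2 \<le> T \<and> (\<forall>a b w. 0 \<le> block_form R u \<epsilon> s \<mu> a b w)"
proof -
  have symR: "sym_mat R" using pdR by (simp add: pos_def_def)
  obtain \<kappa> ds where ds: "norm ds = \<epsilon>" and RR: "\<And>z. (R *v z) \<bullet> (R *v z) \<le> \<kappa> * (z \<bullet> z)"
    and lagr: "\<And>d. (u + R *v d) \<bullet> (u + R *v d) + \<kappa> * (\<epsilon>^2 - d \<bullet> d) \<le> (u + R *v ds) \<bullet> (u + R *v ds)"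
    using trust_region_lagrangian_bound[OF symR e] by blast
  define s where "s = sqrt T"
  have "T > 0"
  proof (rule ccontr)
    assume "\<not> T > 0"
    then have zero: "u + R *v d = 0" if "norm d \<le> \<epsilon>" for d
      using bound[OF that] by (meson inner_gt_zero_iff less_le_trans not_less)
    have "R *v ds = 0" using zero[of 0] zero[of ds] ds e by simp
    then show False using pos_def_kernel[OF pdR] ds e by auto
  qed
  then have s: "s > 0" "s^2 = T" by (simp_all add: s_def)
  have "(u + R *v d) \<bullet> (u + R *v d) + \<kappa> * (\<epsilon>^2 - d \<bullet> d) \<le> s^2" for d
    using lagr[of d] bound[of ds] ds s(2) by simp
  with s RR lagrangian_bound_imp_block_form_nonneg show ?thesis by (metis order_refl)
qed

lemma ball_bound_iff_block_form:
  fixes R :: "real^'n^'n"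
  assumes "pos_def R" and "\<epsilon> > 0"
  shows "(\<forall>\<delta>. norm \<delta> \<le> \<epsilon> \<longrightarrow> (u + R *v \<delta>) \<bullet> (u + R *v \<delta>) \<le> T) \<longleftrightarrow>
    (\<exists>s \<mu>. s^2 \<le> T \<and> (\<forall>a b w. 0 \<le> block_form R u \<epsilon> s \<mu> a b w))"
  using ball_bound_imp_block_form_nonneg[OF assms] block_form_nonneg_imp_ball_bound[OF assms(2)]
  by (meson order_trans)

theorem corollary6p2:
  fixes H :: "real^'n^'n" and c x :: "real^'n" and d \<epsilon> t :: real
  assumes "pos_def H" and "\<epsilon> > 0"
  shows "t \<ge> robust_sup (quad H c d) \<epsilon> x \<longleftrightarrow>
    (\<exists>s \<mu>::real. t - s^2 + c \<bullet> (matrix_inv H *v c) - d \<ge> 0 \<and> psd (block_mat H c x \<epsilon> s \<mu>))"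
proof -
  define R where "R = mat_sqrt H"
  define u where "u = R *v x + mat_inv_sqrt H *v c"
  define C where "C = c \<bullet> (matrix_inv H *v c) - d"
  have pdR: "pos_def R" and RR: "R ** R = H" using mat_sqrt[OF assms(1)] by (simp_all add: R_def)
  have symR: "sym_mat R" using pdR by (simp add: pos_def_def)
  have square: "quad H c d (x + \<delta>) = (u + R *v \<delta>) \<bullet> (u + R *v \<delta>) - C" for \<delta>
    using quad_completed_square[OF symR pos_def_invertible[OF pdR] RR, of c d "x + \<delta>"]
    by (simp add: C_def u_def R_def mat_inv_sqrt_def matrix_vector_right_distrib algebra_simps)
  have "continuous_on (cball x \<epsilon>) (quad H c d)"
    unfolding quad_def by (intro continuous_intros linear_continuous_on matrix_vector_mul_bounded_linear)
  then have "t \<ge> robust_sup (quad H c d) \<epsilon> x \<longleftrightarrow>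
      (\<forall>\<delta>. norm \<delta> \<le> \<epsilon> \<longrightarrow> (u + R *v \<delta>) \<bullet> (u + R *v \<delta>) \<le> t + C)"
    by (simp add: robust_sup_le_iff assms(2) less_imp_le square diff_le_eq)
  also have "\<dots> \<longleftrightarrow> (\<exists>s \<mu>. s^2 \<le> t + C \<and> (\<forall>a b w. 0 \<le> block_form R u \<epsilon> s \<mu> a b w))"
    by (rule ball_bound_iff_block_form[OF pdR assms(2)])
  also have "\<dots> \<longleftrightarrow> (\<exists>s \<mu>::real. t - s^2 + C \<ge> 0 \<and> psd (block_mat H c x \<epsilon> s \<mu>))"
    using psd_block_mat_iff[OF symR[unfolded R_def]] by (simp add: R_def u_def algebra_simps)
  finally show ?thesis by (simp add: C_def algebra_simps)
qed

end
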